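(* Let $\mathcal L$ be a finite distributive lattice of rank $r$, let $0\le i\le j\le r$, and let $\mathcal L_{i,j}=\{p\in\mathcal L: i\le\operatorname{rank}p\le j\}$. Then there exist a poset ideal $\mathcal I$ and a poset coideal $\mathcal J$ of $\mathcal L$ such that $H_{\mathcal L_{i,j}}=H_{\mathcal I\cap\mathcal J}=H_{\mathcal I}\cap H_{\mathcal J}$.
   Context: A finite distributive lattice is graded: all maximal chains have the same length $r$ (its rank), and $\operatorname{rank}p$ denotes the rank function value of $p$ ($0$ at the minimum, increasing by $1$ along cover relations). Let $P$ be the set of join-irreducible elements of $\mathcal L$ (elements with exactly one lower neighbor); for $p\in\mathcal L$ put $\ell(p)=\{q\in P:q\le p\}$. Let $K$ be a field, $S=K[x_p,y_p:p\in P]$, $u_q=\prod_{p\in\ell(q)}x_p\prod_{p\in P\setminus\ell(q)}y_p$, and for $\mathcal S\subseteq\mathcal L$ let $H_{\mathcal S}=(u_q:q\in\mathcal S)$. Poset ideals are closed downward, poset coideals upward. *)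

theory Defs
  imports Main "HOL-Library.Poly_Mapping"
begin

text \<open>Polynomials over K in variables of type 'v are
  finitely supported maps from monomials (finitely supported exponent maps) to K. The variable x_p is Inl p, the variable y_p is Inr p.\<close>

definition covers :: "'a::order \<Rightarrow> 'a \<Rightarrow> bool" where
  "covers q p \<longleftrightarrow> q < p \<and> \<not> (\<exists>z. q < z \<and> z < p)"

definition join_irreducibles :: "'a::{finite,distrib_lattice} set" where
  "join_irreducibles = {p. card {q. covers q p} = 1}"

text \<open>Rank: length of a longest chain from the minimum to p (well defined as the
  lattice is graded); equals number of elements of a longest chain below p minus 1.\<close>
definition lrank :: "'a::{finite,distrib_lattice} \<Rightarrow> nat" where
  "lrank p = Max {length xs | xs. xs \<noteq> [] \<and> sorted_wrt (<) xs \<and> (\<forall>x\<in>set xs. x \<le> p)} - 1"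

definition lattice_rank :: "'a::{finite,distrib_lattice} itself \<Rightarrow> nat" where
  "lattice_rank _ = Max (range (lrank :: 'a \<Rightarrow> nat))"

definition ell :: "'a::{finite,distrib_lattice} \<Rightarrow> 'a set" where
  "ell p = {q \<in> join_irreducibles. q \<le> p}"

definition Var :: "'v \<Rightarrow> ('v \<Rightarrow>\<^sub>0 nat) \<Rightarrow>\<^sub>0 'k::field" where
  "Var v = Poly_Mapping.single (Poly_Mapping.single v 1) 1"

text \<open>The polynomial ring S = K[x_p, y_p : p \<in> P], as the set of polynomials
  involving only the variables x_p, y_p with p a join-irreducible.\<close>
definition Sring :: "((('a::{finite,distrib_lattice} + 'a) \<Rightarrow>\<^sub>0 nat) \<Rightarrow>\<^sub>0 'k::field) set" where
  "Sring = {f. \<forall>m \<in> Poly_Mapping.keys f. Poly_Mapping.keys m \<subseteq> Inl ` join_irreducibles \<union> Inr ` join_irreducibles}"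

definition umon :: "'a::{finite,distrib_lattice} \<Rightarrow> (('a + 'a) \<Rightarrow>\<^sub>0 nat) \<Rightarrow>\<^sub>0 'k::field" where
  "umon q = (\<Prod>p\<in>ell q. Var (Inl p)) * (\<Prod>p\<in>join_irreducibles - ell q. Var (Inr p))"

definition ideal_S :: "((('a::{finite,distrib_lattice} + 'a) \<Rightarrow>\<^sub>0 nat) \<Rightarrow>\<^sub>0 'k::field) set
    \<Rightarrow> ((('a + 'a) \<Rightarrow>\<^sub>0 nat) \<Rightarrow>\<^sub>0 'k) set" where
  "ideal_S G = {(\<Sum>g\<in>G. c g * g) | c. \<forall>g\<in>G. c g \<in> Sring}"

definition H :: "'a::{finite,distrib_lattice} set \<Rightarrow> ((('a + 'a) \<Rightarrow>\<^sub>0 nat) \<Rightarrow>\<^sub>0 'k::field) set" where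
  "H T = ideal_S (umon ` T)"

definition poset_ideal :: "'a::order set \<Rightarrow> bool" where
  "poset_ideal I \<longleftrightarrow> (\<forall>x\<in>I. \<forall>y. y \<le> x \<longrightarrow> y \<in> I)"

definition poset_coideal :: "'a::order set \<Rightarrow> bool" where
  "poset_coideal J \<longleftrightarrow> (\<forall>x\<in>J. \<forall>y. x \<le> y \<longrightarrow> y \<in> J)"

end

theory Submission
  imports Defs
begin

text \<open>Take \<open>I\<close> the elements of rank at most \<open>j\<close> and \<open>J\<close> those of rank at least \<open>i\<close>.
  All ideals involved are monomial ideals, so a polynomial lies in \<open>H\<^sub>I \<inter> H\<^sub>J\<close> iff each of
  its monomials is divisible by some \<open>u\<^sub>p\<close> with \<open>p \<in> I\<close> and some \<open>u\<^sub>q\<close> with \<open>q \<in> J\<close>. Since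
  \<open>\<ell>\<close> turns meets into intersections, \<open>u\<^sub>z\<close> divides \<open>lcm(u\<^sub>p, u\<^sub>q)\<close> for every
  \<open>z\<close> with \<open>p \<sqinter> q \<le> z \<le> q\<close>, and because the lattice is graded such a \<open>z\<close> can be chosen
  with rank between \<open>i\<close> and \<open>j\<close>.\<close>

unbundle lattice_syntax

section \<open>Rank in a finite distributive lattice\<close>

lemma sorted_wrt_less_imp_distinct: "sorted_wrt ((<)::'a::order \<Rightarrow> _) xs \<Longrightarrow> distinct xs"
  by (induction xs) auto

lemma length_ge_2_imp_append_pair: "2 \<le> length xs \<Longrightarrow> \<exists>zs b a. xs = zs @ [b, a]"
proof (induction xs rule: rev_induct)
  case (snoc a ys)
  then show ?case by (cases ys rule: rev_cases) auto
qed simp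

definition chains_below :: "'a::order \<Rightarrow> 'a list set" where
  "chains_below p = {xs. xs \<noteq> [] \<and> sorted_wrt (<) xs \<and> (\<forall>x\<in>set xs. x \<le> p)}"

lemma lrank_eq_Max_chains_below: "lrank p = Max (length ` chains_below p) - 1"
  unfolding lrank_def chains_below_def by (simp add: image_def) metis

lemma singleton_in_chains_below: "[p] \<in> chains_below p"
  unfolding chains_below_def by simp

lemma finite_lengths_chains_below: "finite (length ` chains_below (p::'a::{finite,order}))"
proof (rule finite_subset)
  show "length ` chains_below p \<subseteq> {..card (UNIV::'a set)}"
  proof
    fix n assume "n \<in> length ` chains_below p"
    then obtain xs where xs: "xs \<in> chains_below p" "n = length xs" by auto
    then have "distinct xs"
      unfolding chains_below_def by (auto intro: sorted_wrt_less_imp_distinct)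
    then have "n = card (set xs)" using xs(2) by (simp add: distinct_card)
    also have "\<dots> \<le> card (UNIV::'a set)" by (rule card_mono) auto
    finally show "n \<in> {..card (UNIV::'a set)}" by simp
  qed
qed simp

lemma length_chains_below_le: "xs \<in> chains_below p \<Longrightarrow> length xs \<le> Suc (lrank p)"
proof -
  assume xs: "xs \<in> chains_below p"
  have "length xs \<le> Max (length ` chains_below p)"
    using xs finite_lengths_chains_below by (intro Max_ge) auto
  moreover have "1 \<le> Max (length ` chains_below p)"
    using singleton_in_chains_below finite_lengths_chains_below
    by (metis Max_ge image_eqI length_Cons list.size(3) One_nat_def)
  ultimately show ?thesis unfolding lrank_eq_Max_chains_below by linarith
qed

lemma longest_chain_below: "\<exists>xs\<in>chains_below p. length xs = Suc (lrank p)"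
proof -
  have "length ` chains_below p \<noteq> {}" using singleton_in_chains_below by auto
  then have "Max (length ` chains_below p) \<in> length ` chains_below p"
    using finite_lengths_chains_below by (rule Max_in[rotated])
  then obtain xs where xs: "xs \<in> chains_below p" "length xs = Max (length ` chains_below p)"
    by auto
  moreover from xs(1) have "0 < length xs" unfolding chains_below_def by simp
  ultimately show ?thesis
    unfolding lrank_eq_Max_chains_below by (intro bexI[of _ xs]) auto
qed

lemma lrank_mono: "(x::'a::{finite,distrib_lattice}) \<le> y \<Longrightarrow> lrank x \<le> lrank y"
proof -
  assume "x \<le> y"
  obtain xs where "xs \<in> chains_below x" "length xs = Suc (lrank x)"
    using longest_chain_below by blast
  moreover from this(1) \<open>x \<le> y\<close> have "xs \<in> chains_below y"
    unfolding chains_below_def by auto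
  ultimately show ?thesis using length_chains_below_le by fastforce
qed

lemma lrank_strict_mono: "(x::'a::{finite,distrib_lattice}) < y \<Longrightarrow> lrank x < lrank y"
proof -
  assume "x < y"
  obtain xs where xs: "xs \<in> chains_below x" "length xs = Suc (lrank x)"
    using longest_chain_below by blast
  then have "xs @ [y] \<in> chains_below y" using \<open>x < y\<close> unfolding chains_below_def
    by (auto simp: sorted_wrt_append intro: le_less_trans less_imp_le)
  then show ?thesis using length_chains_below_le xs by fastforce
qed

lemma exists_covers_above:
  assumes "(x::'a::{finite,order}) < y"
  shows "\<exists>c. covers c y \<and> x \<le> c"
proof -
  have "finite {z. x \<le> z \<and> z < y}" "{z. x \<le> z \<and> z < y} \<noteq> {}" using assms by auto
  from finite_has_maximal[OF this] obtain m where m: "x \<le> m" "m < y"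
    and maximal: "\<And>z. x \<le> z \<Longrightarrow> z < y \<Longrightarrow> m \<le> z \<Longrightarrow> m = z"
    by auto
  have "covers m y"
    unfolding covers_def using m maximal by (metis order.strict_iff_not order.trans)
  with m show ?thesis by blast
qed

lemma exists_covers_lrank_Suc:
  assumes "0 < lrank (y::'a::{finite,distrib_lattice})"
  shows "\<exists>c. covers c y \<and> lrank y = Suc (lrank c)"
proof -
  obtain xs where xs: "xs \<in> chains_below y" "length xs = Suc (lrank y)"
    using longest_chain_below by blast
  with assms have "2 \<le> length xs" by simp
  then obtain zs b a where zs: "xs = zs @ [b, a]" using length_ge_2_imp_append_pair by blast
  from xs(1) have "b < a" "a \<le> y" "sorted_wrt (<) (zs @ [b])" "\<forall>z\<in>set zs. z < b"
    unfolding zs chains_below_def by (auto simp: sorted_wrt_append)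
  obtain c where c: "covers c y" "b \<le> c"
    using exists_covers_above \<open>b < a\<close> \<open>a \<le> y\<close> by (meson less_le_trans)
  have "zs @ [b] \<in> chains_below c"
    unfolding chains_below_def
    using \<open>sorted_wrt (<) (zs @ [b])\<close> \<open>\<forall>z\<in>set zs. z < b\<close> c(2) by (auto intro: order.trans)
  then have "lrank y \<le> Suc (lrank c)"
    using length_chains_below_le xs(2) zs by fastforce
  moreover have "lrank c < lrank y"
    using c(1) lrank_strict_mono unfolding covers_def by blast
  ultimately show ?thesis using c(1) by auto
qed

lemma covers_inf_if_covers:
  fixes c d z :: "'a::distrib_lattice"
  assumes "covers c z" "covers d z" "c \<noteq> d"
  shows "covers (c \<sqinter> d) c"
  unfolding covers_def
proof (intro conjI notI)
  have "c < z" "d < z" using assms unfolding covers_def by auto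
  have "\<not> c \<le> d"
    using assms \<open>d < z\<close> unfolding covers_def by (auto simp: order.strict_iff_order)
  then show "c \<sqinter> d < c" by (metis inf.absorb_iff1 inf_le1 order.not_eq_order_implies_strict)
  assume "\<exists>e. c \<sqinter> d < e \<and> e < c"
  then obtain e where e: "c \<sqinter> d < e" "e < c" by auto
  then have "\<not> e \<le> d" by (metis le_inf_iff less_le_not_le)
  then have "d < e \<squnion> d" by (metis sup.cobounded1 sup.cobounded2 order.not_eq_order_implies_strict)
  moreover have "e \<squnion> d \<le> z" using e(2) \<open>c < z\<close> \<open>d < z\<close> by (simp add: less_imp_le)
  ultimately have "e \<squnion> d = z" using assms(2) unfolding covers_def by (auto simp: order.order_iff_strict)
  then have "c = (c \<sqinter> e) \<squnion> (c \<sqinter> d)" using \<open>c < z\<close> by (metis inf.absorb1 inf_sup_distrib1 less_imp_le)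
  also have "\<dots> = e" using e by (simp add: inf.absorb2 sup.absorb1 less_imp_le)
  finally show False using e(2) by simp
qed

lemma lrank_covers:
  "covers c (z::'a::{finite,distrib_lattice}) \<Longrightarrow> lrank z = Suc (lrank c)"
proof (induction "lrank z" arbitrary: z c rule: less_induct)
  case less
  have "lrank c < lrank z" using less.prems lrank_strict_mono unfolding covers_def by blast
  then obtain c' where c': "covers c' z" "lrank z = Suc (lrank c')"
    using exists_covers_lrank_Suc by (metis gr0I less_zeroE)
  show ?case
  proof (cases "c' = c")
    case False
    \<comment> \<open>diamond argument: \<open>c\<close> and \<open>c'\<close> both cover \<open>c \<sqinter> c'\<close>,
      so by induction both have rank \<open>Suc (lrank (c \<sqinter> c'))\<close>\<close>
    have "covers (c \<sqinter> c') c" "covers (c \<sqinter> c') c'"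
      using covers_inf_if_covers[OF less.prems c'(1)] covers_inf_if_covers[OF c'(1) less.prems]
        False by (auto simp: inf_commute)
    moreover have "lrank c' < lrank z" using c'(2) by simp
    ultimately have "lrank c = lrank c'"
      using less.hyps \<open>lrank c < lrank z\<close> by metis
    with c' show ?thesis by simp
  qed (use c' in simp)
qed

lemma exists_lrank_between:
  fixes x y :: "'a::{finite,distrib_lattice}"
  assumes "x \<le> y" "lrank x \<le> k" "k \<le> lrank y"
  shows "\<exists>z. x \<le> z \<and> z \<le> y \<and> lrank z = k"
  using assms
proof (induction "lrank y" arbitrary: y rule: less_induct)
  case less
  show ?case
  proof (cases "lrank y = k")
    case False
    with less.prems have "x < y" by (auto simp: order.strict_iff_order)
    then obtain c where c: "covers c y" "x \<le> c" using exists_covers_above by blast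
    moreover have "lrank y = Suc (lrank c)" using c(1) by (rule lrank_covers)
    ultimately obtain z where "x \<le> z" "z \<le> c" "lrank z = k"
      using less False by (metis le_SucE lessI)
    moreover have "c \<le> y" using c(1) unfolding covers_def by (simp add: less_imp_le)
    ultimately show ?thesis by (blast intro: order.trans)
  qed (use less.prems in blast)
qed

lemma exists_between_in_rank_band:
  fixes p q :: "'a::{finite,distrib_lattice}"
  assumes "i \<le> j" "lrank p \<le> j" "i \<le> lrank q"
  shows "\<exists>r. p \<sqinter> q \<le> r \<and> r \<le> q \<and> i \<le> lrank r \<and> lrank r \<le> j"
proof -
  have "lrank (p \<sqinter> q) \<le> lrank p" "lrank (p \<sqinter> q) \<le> lrank q"
    by (simp_all add: lrank_mono)
  with assms obtain r where "p \<sqinter> q \<le> r" "r \<le> q" "lrank r = max (lrank (p \<sqinter> q)) i"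
    using exists_lrank_between[of "p \<sqinter> q" q "max (lrank (p \<sqinter> q)) i"] by auto
  with assms \<open>lrank (p \<sqinter> q) \<le> lrank p\<close> show ?thesis by auto
qed

lemma poset_ideal_lrank_le: "poset_ideal {p::'a::{finite,distrib_lattice}. lrank p \<le> j}"
  unfolding poset_ideal_def by (auto dest: lrank_mono)

lemma poset_coideal_lrank_ge: "poset_coideal {p::'a::{finite,distrib_lattice}. i \<le> lrank p}"
  unfolding poset_coideal_def by (auto dest: lrank_mono)

section \<open>Monomial ideals of the ring \<open>S\<close>\<close>

definition S_vars :: "('a::{finite,distrib_lattice} + 'a) set" where
  "S_vars = Inl ` join_irreducibles \<union> Inr ` join_irreducibles"

lemma Sring_iff: "f \<in> Sring \<longleftrightarrow> (\<forall>m \<in> Poly_Mapping.keys f. Poly_Mapping.keys m \<subseteq> S_vars)"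
  unfolding Sring_def S_vars_def by simp

lemma single_in_Sring: "Poly_Mapping.keys m \<subseteq> S_vars \<Longrightarrow> Poly_Mapping.single m c \<in> Sring"
  unfolding Sring_iff by simp

lemma zero_in_Sring: "0 \<in> Sring"
  by (simp add: Sring_iff)

lemma Sring_add: "a \<in> Sring \<Longrightarrow> b \<in> Sring \<Longrightarrow> a + b \<in> Sring"
  unfolding Sring_iff using keys_add[of a b] by blast

lemma Sring_mult: "a \<in> Sring \<Longrightarrow> b \<in> Sring \<Longrightarrow> a * b \<in> Sring"
  unfolding Sring_iff
proof (intro ballI)
  fix m
  assume "\<forall>m\<in>Poly_Mapping.keys a. Poly_Mapping.keys m \<subseteq> S_vars"
    and "\<forall>m\<in>Poly_Mapping.keys b. Poly_Mapping.keys m \<subseteq> S_vars"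
    and "m \<in> Poly_Mapping.keys (a * b)"
  moreover from this(3) obtain x y where "m = x + y"
    "x \<in> Poly_Mapping.keys a" "y \<in> Poly_Mapping.keys b"
    using keys_mult[of a b] by blast
  ultimately show "Poly_Mapping.keys m \<subseteq> S_vars"
    using keys_add[of x y] by blast
qed

lemma Sring_sum: "(\<And>x. x \<in> A \<Longrightarrow> F x \<in> Sring) \<Longrightarrow> sum F A \<in> Sring"
  by (induction A rule: infinite_finite_induct) (auto intro: Sring_add zero_in_Sring)

lemma sum_in_ideal_S: "(\<And>g. g \<in> G \<Longrightarrow> c g \<in> Sring) \<Longrightarrow> (\<Sum>g\<in>G. c g * g) \<in> ideal_S G"
  unfolding ideal_S_def by blast

lemma ideal_S_add:
  assumes "a \<in> ideal_S G" "b \<in> ideal_S G"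
  shows "a + b \<in> ideal_S G"
proof -
  obtain c d where "a = (\<Sum>g\<in>G. c g * g)" "b = (\<Sum>g\<in>G. d g * g)"
    and "\<forall>g\<in>G. c g \<in> Sring" "\<forall>g\<in>G. d g \<in> Sring"
    using assms unfolding ideal_S_def by auto
  then have "a + b = (\<Sum>g\<in>G. (c g + d g) * g)"
    by (simp add: distrib_right sum.distrib)
  also have "\<dots> \<in> ideal_S G"
    using \<open>\<forall>g\<in>G. c g \<in> Sring\<close> \<open>\<forall>g\<in>G. d g \<in> Sring\<close> by (intro sum_in_ideal_S Sring_add) auto
  finally show ?thesis .
qed

lemma zero_in_ideal_S: "0 \<in> ideal_S G"
  using sum_in_ideal_S[of G "\<lambda>_. 0"] by (simp add: zero_in_Sring)

lemma ideal_S_sum: "(\<And>x. x \<in> A \<Longrightarrow> F x \<in> ideal_S G) \<Longrightarrow> sum F A \<in> ideal_S G"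
  by (induction A rule: infinite_finite_induct) (auto simp: ideal_S_add zero_in_ideal_S)

lemma mult_in_ideal_S:
  assumes "finite G" "s \<in> Sring" "g \<in> G"
  shows "s * g \<in> ideal_S G"
proof -
  have "s * g = (\<Sum>h\<in>G. (if h = g then s else 0) * h)"
    using assms by (simp add: if_distrib[of "\<lambda>c. c * _"] cong: if_cong)
  also have "\<dots> \<in> ideal_S G"
    using assms(2) by (intro sum_in_ideal_S) (simp add: zero_in_Sring)
  finally show ?thesis .
qed

definition exps_dvd :: "('v \<Rightarrow>\<^sub>0 nat) \<Rightarrow> ('v \<Rightarrow>\<^sub>0 nat) \<Rightarrow> bool" where
  "exps_dvd s t \<longleftrightarrow> (\<forall>v. Poly_Mapping.lookup s v \<le> Poly_Mapping.lookup t v)"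

lemma exps_dvd_add_left: "exps_dvd s (a + s)"
  unfolding exps_dvd_def by (simp add: lookup_add)

lemma exps_dvd_imp_diff_add: "exps_dvd s t \<Longrightarrow> t = (t - s) + s"
  unfolding exps_dvd_def by (intro poly_mapping_eqI) (simp add: lookup_add lookup_minus)

lemma poly_mapping_sum_single_keys:
  "f = (\<Sum>m\<in>Poly_Mapping.keys f. Poly_Mapping.single m (Poly_Mapping.lookup f m))"
  by (rule poly_mapping_eqI) (simp add: lookup_sum lookup_single when_def in_keys_iff)

lemma keys_in_ideal_S_monomials:
  assumes "f \<in> ideal_S ((\<lambda>t. Poly_Mapping.single t 1) ` M)" "m \<in> Poly_Mapping.keys f"
  shows "\<exists>t\<in>M. exps_dvd t m"
proof -
  obtain c where "f = (\<Sum>g\<in>(\<lambda>t. Poly_Mapping.single t 1) ` M. c g * g)"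
    using assms(1) unfolding ideal_S_def by blast
  with assms(2) obtain t where "t \<in> M"
    "m \<in> Poly_Mapping.keys (c (Poly_Mapping.single t 1) * Poly_Mapping.single t 1)"
    using keys_sum by fastforce
  then obtain a where "t \<in> M" "m = a + t"
    using keys_mult by fastforce
  then show ?thesis using exps_dvd_add_left by blast
qed

lemma in_ideal_S_monomialsI:
  assumes "finite M" "f \<in> Sring" "\<And>m. m \<in> Poly_Mapping.keys f \<Longrightarrow> \<exists>t\<in>M. exps_dvd t m"
  shows "f \<in> ideal_S ((\<lambda>t. Poly_Mapping.single t 1) ` M)"
proof (subst poly_mapping_sum_single_keys, rule ideal_S_sum)
  fix m assume m: "m \<in> Poly_Mapping.keys f"
  then obtain t where "t \<in> M" "exps_dvd t m" using assms(3) by blast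
  have "Poly_Mapping.keys (m - t) \<subseteq> Poly_Mapping.keys m"
    by (auto simp: in_keys_iff lookup_minus)
  also have "\<dots> \<subseteq> S_vars"
    using assms(2) m unfolding Sring_iff by blast
  finally have "Poly_Mapping.single (m - t) (Poly_Mapping.lookup f m) * Poly_Mapping.single t 1
      \<in> ideal_S ((\<lambda>t. Poly_Mapping.single t 1) ` M)"
    using assms(1) \<open>t \<in> M\<close> by (intro mult_in_ideal_S single_in_Sring) auto
  moreover have "Poly_Mapping.single (m - t) (Poly_Mapping.lookup f m) * Poly_Mapping.single t 1
      = Poly_Mapping.single m (Poly_Mapping.lookup f m)"
    by (subst exps_dvd_imp_diff_add[OF \<open>exps_dvd t m\<close>]) (simp add: mult_single)
  ultimately show "Poly_Mapping.single m (Poly_Mapping.lookup f m)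
      \<in> ideal_S ((\<lambda>t. Poly_Mapping.single t 1) ` M)"
    by simp
qed

lemma ideal_S_monomials:
  fixes M :: "(('a::{finite,distrib_lattice} + 'a) \<Rightarrow>\<^sub>0 nat) set"
  assumes "finite M" "\<And>t. t \<in> M \<Longrightarrow> Poly_Mapping.keys t \<subseteq> S_vars"
  shows "ideal_S ((\<lambda>t. Poly_Mapping.single t (1::'k::field)) ` M)
    = {f \<in> Sring. \<forall>m\<in>Poly_Mapping.keys f. \<exists>t\<in>M. exps_dvd t m}"
proof (intro set_eqI iffI)
  fix f :: "(('a + 'a) \<Rightarrow>\<^sub>0 nat) \<Rightarrow>\<^sub>0 'k"
  assume f: "f \<in> ideal_S ((\<lambda>t. Poly_Mapping.single t 1) ` M)"
  then obtain c where "f = (\<Sum>g\<in>(\<lambda>t. Poly_Mapping.single t 1) ` M. c g * g)"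
    "\<forall>g\<in>(\<lambda>t. Poly_Mapping.single t 1) ` M. c g \<in> Sring"
    unfolding ideal_S_def by blast
  then have "f \<in> Sring"
    using assms(2) by (auto intro!: Sring_sum Sring_mult single_in_Sring)
  with f show "f \<in> {f \<in> Sring. \<forall>m\<in>Poly_Mapping.keys f. \<exists>t\<in>M. exps_dvd t m}"
    using keys_in_ideal_S_monomials by blast
qed (use assms(1) in_ideal_S_monomialsI in blast)

section \<open>The ideals \<open>H\<^sub>T\<close>\<close>

definition umon_exps :: "'a::{finite,distrib_lattice} \<Rightarrow> ('a + 'a) \<Rightarrow>\<^sub>0 nat" where
  "umon_exps q = (\<Sum>p\<in>ell q. Poly_Mapping.single (Inl p) 1)
     + (\<Sum>p\<in>join_irreducibles - ell q. Poly_Mapping.single (Inr p) 1)"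

lemma prod_single_one:
  "finite A \<Longrightarrow> (\<Prod>x\<in>A. Poly_Mapping.single (f x) (1::'k::field)) = Poly_Mapping.single (\<Sum>x\<in>A. f x) 1"
  by (induction A rule: finite_induct) (auto simp: mult_single)

lemma umon_eq_single: "(umon q :: _ \<Rightarrow>\<^sub>0 'k::field) = Poly_Mapping.single (umon_exps q) 1"
  unfolding umon_def umon_exps_def Var_def by (simp add: prod_single_one mult_single)

lemma lookup_umon_exps_Inl:
  "Poly_Mapping.lookup (umon_exps q) (Inl p) = (if p \<in> ell q then 1 else 0)"
  unfolding umon_exps_def by (simp add: lookup_add lookup_sum lookup_single when_def)

lemma lookup_umon_exps_Inr:
  "Poly_Mapping.lookup (umon_exps q) (Inr p) = (if p \<in> join_irreducibles - ell q then 1 else 0)"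
  unfolding umon_exps_def by (simp add: lookup_add lookup_sum lookup_single when_def)

lemma keys_umon_exps: "Poly_Mapping.keys (umon_exps q) \<subseteq> S_vars"
proof
  fix v assume "v \<in> Poly_Mapping.keys (umon_exps q)"
  moreover have "ell q \<subseteq> join_irreducibles" unfolding ell_def by blast
  ultimately show "v \<in> S_vars"
    by (cases v) (auto simp: in_keys_iff lookup_umon_exps_Inl lookup_umon_exps_Inr S_vars_def
      split: if_splits)
qed

lemma H_eq: "(H T :: (_ \<Rightarrow>\<^sub>0 'k::field) set)
   = {f \<in> Sring. \<forall>m\<in>Poly_Mapping.keys f. \<exists>t\<in>T. exps_dvd (umon_exps t) m}"
proof -
  have "(umon ` T :: (_ \<Rightarrow>\<^sub>0 'k) set) = (\<lambda>t. Poly_Mapping.single t 1) ` umon_exps ` T"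
    by (auto simp: umon_eq_single)
  moreover have "(ideal_S ((\<lambda>t. Poly_Mapping.single t 1) ` umon_exps ` T) :: (_ \<Rightarrow>\<^sub>0 'k) set)
    = {f \<in> Sring. \<forall>m\<in>Poly_Mapping.keys f. \<exists>t\<in>umon_exps ` T. exps_dvd t m}"
    using keys_umon_exps by (intro ideal_S_monomials) auto
  ultimately show ?thesis unfolding H_def by auto
qed

lemma H_mono: "T \<subseteq> T' \<Longrightarrow> H T \<subseteq> H T'"
  unfolding H_eq by blast

lemma ell_inf: "ell (p \<sqinter> q) = ell p \<inter> ell q"
  unfolding ell_def by auto

lemma ell_mono: "p \<le> q \<Longrightarrow> ell p \<subseteq> ell q"
  unfolding ell_def using order.trans by blast

text \<open>\<open>u\<^sub>r\<close> divides \<open>lcm(u\<^sub>p, u\<^sub>q)\<close>: its \<open>x\<close>-variables are indexed by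
  \<open>\<ell> r \<subseteq> \<ell> q\<close>, its \<open>y\<close>-variables by \<open>P - \<ell> r \<subseteq> (P - \<ell> p) \<union> (P - \<ell> q)\<close>.\<close>

lemma exps_dvd_umon_exps_between:
  assumes "exps_dvd (umon_exps p) m" "exps_dvd (umon_exps q) m" "p \<sqinter> q \<le> r" "r \<le> q"
  shows "exps_dvd (umon_exps r) m"
  unfolding exps_dvd_def
proof
  fix v
  have "ell p \<inter> ell q \<subseteq> ell r" "ell r \<subseteq> ell q"
    using ell_mono[OF assms(3)] ell_mono[OF assms(4)] by (simp_all add: ell_inf)
  moreover have "Poly_Mapping.lookup (umon_exps p) v \<le> Poly_Mapping.lookup m v"
    "Poly_Mapping.lookup (umon_exps q) v \<le> Poly_Mapping.lookup m v"
    using assms(1,2) unfolding exps_dvd_def by blast+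
  ultimately show "Poly_Mapping.lookup (umon_exps r) v \<le> Poly_Mapping.lookup m v"
    by (cases v) (auto simp: lookup_umon_exps_Inl lookup_umon_exps_Inr split: if_split_asm)
qed

lemma H_Int_subset:
  assumes "\<And>p q. p \<in> A \<Longrightarrow> q \<in> B \<Longrightarrow> \<exists>r\<in>C. p \<sqinter> q \<le> r \<and> r \<le> q"
  shows "(H A \<inter> H B :: (_ \<Rightarrow>\<^sub>0 'k::field) set) \<subseteq> H C"
proof
  fix f :: "(('a + 'a) \<Rightarrow>\<^sub>0 nat) \<Rightarrow>\<^sub>0 'k"
  assume "f \<in> H A \<inter> H B"
  then have f: "f \<in> Sring" "\<forall>m\<in>Poly_Mapping.keys f. \<exists>p\<in>A. exps_dvd (umon_exps p) m"
    "\<forall>m\<in>Poly_Mapping.keys f. \<exists>q\<in>B. exps_dvd (umon_exps q) m"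
    by (simp_all add: H_eq)
  have "\<exists>r\<in>C. exps_dvd (umon_exps r) m" if key: "m \<in> Poly_Mapping.keys f" for m
  proof -
    obtain p where p: "p \<in> A" "exps_dvd (umon_exps p) m"
      using bspec[OF f(2) key] by blast
    obtain q where q: "q \<in> B" "exps_dvd (umon_exps q) m"
      using bspec[OF f(3) key] by blast
    obtain r where "r \<in> C" "p \<sqinter> q \<le> r" "r \<le> q"
      using assms[OF p(1) q(1)] by blast
    with p(2) q(2) show ?thesis by (blast intro: exps_dvd_umon_exps_between)
  qed
  with f(1) show "f \<in> H C" by (simp add: H_eq)
qed

theorem lemma3p13:
  fixes i j :: nat
  assumes "i \<le> j" and "j \<le> lattice_rank TYPE('a::{finite,distrib_lattice})"
  shows "\<exists>I J :: 'a set. poset_ideal I \<and> poset_coideal J \<and>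
     (H {p. i \<le> lrank p \<and> lrank p \<le> j} :: ((('a + 'a) \<Rightarrow>\<^sub>0 nat) \<Rightarrow>\<^sub>0 'k::field) set)
       = H (I \<inter> J) \<and>
     (H (I \<inter> J) :: ((('a + 'a) \<Rightarrow>\<^sub>0 nat) \<Rightarrow>\<^sub>0 'k) set) = H I \<inter> H J"
proof (intro exI conjI)
  let ?I = "{p::'a. lrank p \<le> j}" and ?J = "{p::'a. i \<le> lrank p}"
  show "poset_ideal ?I" "poset_coideal ?J"
    by (rule poset_ideal_lrank_le, rule poset_coideal_lrank_ge)
  show "H {p. i \<le> lrank p \<and> lrank p \<le> j} = H (?I \<inter> ?J)"
    by (rule arg_cong[of _ _ H]) blast
  have "H ?I \<inter> H ?J \<subseteq> H (?I \<inter> ?J)"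
    by (rule H_Int_subset) (use exists_between_in_rank_band[OF assms(1)] in fastforce)
  moreover have "H (?I \<inter> ?J) \<subseteq> H ?I \<inter> H ?J"
    by (simp add: H_mono)
  ultimately show "H (?I \<inter> ?J) = H ?I \<inter> H ?J"
    by (rule antisym[rotated])
qed

end
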